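(* Let $\mathcal{A}$ be a finite abelian group, $N\ge1$, and let $\alpha$ be a stationary $N$-step Markov measure on $\mathcal{A}^{\mathbb{Z}}$ with transition probabilities $q^{\mathbf{a}}_b=\Pr[c_N=b\mid (c_0,\dots,c_{N-1})=\mathbf{a}]$, $\mathbf{a}\in\mathcal{A}^{N}$, $b\in\mathcal{A}$. If all $q^{\mathbf{a}}_b$ are nonzero, then $\alpha$ is harmonically mixing.
   Context: An $N$-step Markov measure is a shift-invariant measure under which the distribution of each coordinate, conditioned on all previous coordinates, depends only on the previous $N$ coordinates via $q^{\mathbf{a}}_b$ (with $\sum_b q^{\mathbf{a}}_b=1$). Characters of $\mathcal{A}^{\mathbb{Z}}$ are $\chi=\bigotimes_{n}\chi_n$, $\chi_n$ characters of $\mathcal{A}$, all but finitely many trivial; rank$(\chi)$ is the number of nontrivial $\chi_n$. A measure is harmonically mixing if for every $\varepsilon>0$ there is $R$ with rank$(\chi)>R\Rightarrow|\int\chi\,d\mu|<\varepsilon$. *)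

theory Defs
  imports "HOL-Probability.Probability"
begin

definition shift_space :: "(int \<Rightarrow> 'a) measure" where
  "shift_space = PiM UNIV (\<lambda>_. count_space UNIV)"

definition character :: "('a::ab_group_add \<Rightarrow> complex) \<Rightarrow> bool" where
  "character ch \<longleftrightarrow> (\<forall>x. norm (ch x) = 1) \<and> (\<forall>x y. ch (x + y) = ch x * ch y)"

text \<open>Characters of A^Z: families of characters, all but finitely many trivial.\<close>
definition char_support :: "(int \<Rightarrow> 'a \<Rightarrow> complex) \<Rightarrow> int set" where
  "char_support ch = {n. ch n \<noteq> (\<lambda>_. 1)}"

definition shift_character :: "(int \<Rightarrow> 'a::ab_group_add \<Rightarrow> complex) \<Rightarrow> bool" where
  "shift_character ch \<longleftrightarrow> (\<forall>n. character (ch n)) \<and> finite (char_support ch)"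

definition char_rank :: "(int \<Rightarrow> 'a \<Rightarrow> complex) \<Rightarrow> nat" where
  "char_rank ch = card (char_support ch)"

definition char_eval :: "(int \<Rightarrow> 'a \<Rightarrow> complex) \<Rightarrow> (int \<Rightarrow> 'a) \<Rightarrow> complex" where
  "char_eval ch x = (\<Prod>n\<in>char_support ch. ch n (x n))"

definition harmonically_mixing :: "(int \<Rightarrow> 'a::ab_group_add) measure \<Rightarrow> bool" where
  "harmonically_mixing \<mu> \<longleftrightarrow>
     (\<forall>eps>0. \<exists>R::nat. \<forall>ch. shift_character ch \<and> char_rank ch > R \<longrightarrow>
        norm (integral\<^sup>L \<mu> (char_eval ch)) < eps)"

definition shift_invariant :: "(int \<Rightarrow> 'a) measure \<Rightarrow> bool" where
  "shift_invariant \<mu> \<longleftrightarrow> distr \<mu> shift_space (\<lambda>x n. x (n + 1)) = \<mu>"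

text \<open>N-step Markov property with transition probabilities q: conditioned on any
  finite past window of length at least N (hence on the whole past), the law of the
  next coordinate is given by q applied to the last N coordinates.  Words in A^N are
  lists of length N.  Stated via cylinder probabilities (no division by zero issues).\<close>
definition markov_measure :: "nat \<Rightarrow> ('a list \<Rightarrow> 'a \<Rightarrow> real) \<Rightarrow> (int \<Rightarrow> 'a) measure \<Rightarrow> bool" where
  "markov_measure N q \<mu> \<longleftrightarrow>
     (\<forall>(n::int) (w::'a list) (b::'a). length w \<ge> N \<longrightarrow>
        measure \<mu> {x \<in> space \<mu>. (\<forall>i<length w. x (n + int i) = w ! i) \<and> x (n + int (length w)) = b}
        = measure \<mu> {x \<in> space \<mu>. \<forall>i<length w. x (n + int i) = w ! i} * q (drop (length w - N) w) b)"

end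

theory Submission
  imports Defs
begin

text \<open>
  Restrict a character \<chi> of rank r to a finite window and write its integral as a sum over
  cylinder words. By the Markov property the probability of a cylinder on an interval is the
  probability of its first N letters times one transition probability per later position, and
  the transition at j reads only the coordinates j - N, ..., j. Choose a set T of at least
  r / (N + 1) points of the support of \<chi> that are pairwise more than N apart. For t in T the
  N + 1 transition factors reading coordinate t are each at least min q, and they do not read any
  other point of T. Summing out the coordinate t therefore replaces \<chi>_t(x_t) by an average of the
  nontrivial character \<chi>_t with weights bounded below, whose modulus is at most 1 - \<delta> for a
  \<delta> > 0 depending only on min q, N and the group. Peeling off the points of T one at a time
  gives |\<integral>\<chi> d\<alpha>| \<le> (1 - \<delta>)^|T|.
\<close>

section \<open>Characters of a finite abelian group\<close>

lemma character_zero: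
  assumes "character (\<phi> :: 'a::ab_group_add \<Rightarrow> complex)"
  shows "\<phi> 0 = 1"
proof -
  have "\<phi> 0 * \<phi> 0 = \<phi> 0 * 1"
    using assms unfolding character_def by (metis add_0 mult_1_right)
  moreover have "\<phi> 0 \<noteq> 0"
    using assms unfolding character_def by (metis norm_zero zero_neq_one)
  ultimately show ?thesis by simp
qed

lemma character_sum:
  assumes "character (\<phi> :: 'a::ab_group_add \<Rightarrow> complex)" "finite I"
  shows "\<phi> (\<Sum>i\<in>I. f i) = (\<Prod>i\<in>I. \<phi> (f i))"
  using assms(2) by (induction I rule: finite_induct)
    (auto simp: character_zero[OF assms(1)] assms(1)[unfolded character_def])

lemma sum_UNIV_const_eq_zero: "(\<Sum>(_::'a)\<in>UNIV. b) = (0::'a::{ab_group_add,finite})"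
proof -
  have "(\<Sum>a\<in>(UNIV::'a set). a + b) = (\<Sum>a\<in>UNIV. a)"
    by (rule sum.reindex_bij_witness[where i="\<lambda>a. a - b" and j="\<lambda>a. a + b"]) auto
  then show ?thesis by (simp add: sum.distrib)
qed

lemma character_pow_card:
  assumes "character (\<phi> :: 'a::{ab_group_add,finite} \<Rightarrow> complex)"
  shows "\<phi> b ^ CARD('a) = 1"
  using character_sum[OF assms, of "UNIV :: 'a set" "\<lambda>_. b"]
  by (simp add: sum_UNIV_const_eq_zero character_zero[OF assms])

lemma norm_one_plus_less_2:
  assumes "cmod z = 1" "z \<noteq> 1"
  shows "cmod (1 + z) < 2"
proof -
  have "cmod (1 + z) \<noteq> cmod 1 + cmod z"
    using assms norm_triangle_eq[of 1 z] by simp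
  moreover have "cmod (1 + z) \<le> cmod 1 + cmod z" by (rule norm_triangle_ineq)
  ultimately show ?thesis using assms(1) by simp
qed

lemma roots_of_unity_gap:
  assumes "K > 0"
  obtains e :: real where "e > 0" "\<And>z. z ^ K = 1 \<Longrightarrow> z \<noteq> 1 \<Longrightarrow> cmod (1 + z) \<le> 2 - e"
proof -
  define Z where "Z = {z::complex. z ^ K = 1} - {1}"
  have "finite Z" unfolding Z_def using finite_roots_unity[of K] assms by simp
  have "cmod z = 1" if "z \<in> Z" for z
  proof -
    have "cmod z ^ K = 1 ^ K" using that unfolding Z_def by (simp flip: norm_power)
    then show ?thesis using power_eq_imp_eq_base[of "cmod z" K 1] assms by simp
  qed
  then have gap_pos: "\<forall>z\<in>Z. 2 - cmod (1 + z) > 0"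
    using norm_one_plus_less_2 unfolding Z_def by (simp add: Ball_def)
  define e where "e = Min (insert 1 ((\<lambda>z. 2 - cmod (1 + z)) ` Z))"
  have "e > 0" unfolding e_def using \<open>finite Z\<close> gap_pos by simp
  moreover have "cmod (1 + z) \<le> 2 - e" if "z ^ K = 1" "z \<noteq> 1" for z
  proof -
    have "e \<le> 2 - cmod (1 + z)" unfolding e_def using \<open>finite Z\<close> that by (intro Min_le) (auto simp: Z_def)
    then show ?thesis by simp
  qed
  ultimately show ?thesis by (rule that)
qed

lemma norm_weighted_sum_unimodular_le:
  fixes f :: "'i \<Rightarrow> complex" and \<beta> :: "'i \<Rightarrow> real"
  assumes "finite I" "a \<in> I" "b \<in> I" "a \<noteq> b"
    and "\<And>i. i \<in> I \<Longrightarrow> cmod (f i) = 1" "\<And>i. i \<in> I \<Longrightarrow> \<kappa> \<le> \<beta> i" "0 \<le> \<kappa>"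
  shows "cmod (\<Sum>i\<in>I. of_real (\<beta> i) * f i) \<le> (\<Sum>i\<in>I. \<beta> i) - \<kappa> * (2 - cmod (f a + f b))"
proof -
  define \<gamma> where "\<gamma> i = \<beta> i - (if i = a then \<kappa> else 0) - (if i = b then \<kappa> else 0)" for i
  have \<gamma>_nonneg: "\<gamma> i \<ge> 0" if "i \<in> I" for i
    using assms(4) assms(6)[OF that] assms(7) unfolding \<gamma>_def by auto
  have "(\<Sum>i\<in>I. of_real (\<beta> i) * f i) = (\<Sum>i\<in>I. of_real (\<gamma> i) * f i
      + (if i = a then of_real \<kappa> * f i else 0) + (if i = b then of_real \<kappa> * f i else 0))"
    by (rule sum.cong) (auto simp: \<gamma>_def algebra_simps)
  also have "\<dots> = of_real \<kappa> * (f a + f b) + (\<Sum>i\<in>I. of_real (\<gamma> i) * f i)"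
    using assms(1-3) by (simp add: sum.distrib sum.delta algebra_simps)
  finally have split_sum: "(\<Sum>i\<in>I. of_real (\<beta> i) * f i) = \<dots>" .
  have "(\<Sum>i\<in>I. \<beta> i) = 2 * \<kappa> + (\<Sum>i\<in>I. \<gamma> i)"
    using assms(1-4) by (simp add: \<gamma>_def sum_subtractf sum.delta)
  moreover have "cmod (\<Sum>i\<in>I. of_real (\<gamma> i) * f i) \<le> (\<Sum>i\<in>I. \<gamma> i)"
    using norm_sum[of "\<lambda>i. of_real (\<gamma> i) * f i" I] assms(5) \<gamma>_nonneg by (simp add: norm_mult)
  moreover have "cmod (of_real \<kappa> * (f a + f b)) = \<kappa> * cmod (f a + f b)"
    using assms(7) by (simp add: norm_mult)
  ultimately show ?thesis
    unfolding split_sum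
    using norm_triangle_ineq[of "of_real \<kappa> * (f a + f b)" "\<Sum>i\<in>I. of_real (\<gamma> i) * f i"]
    by (simp add: algebra_simps)
qed

lemma nontrivial_character_contraction:
  assumes "0 < \<kappa>"
  obtains \<delta> where "0 < \<delta>" "\<delta> \<le> 1"
    "\<And>(\<phi> :: 'a::{ab_group_add,finite} \<Rightarrow> complex) \<beta>. character \<phi> \<Longrightarrow> \<phi> \<noteq> (\<lambda>_. 1) \<Longrightarrow>
       (\<And>a. \<kappa> \<le> \<beta> a \<and> \<beta> a \<le> 1) \<Longrightarrow>
       cmod (\<Sum>a\<in>UNIV. of_real (\<beta> a) * \<phi> a) \<le> (1 - \<delta>) * (\<Sum>a\<in>UNIV. \<beta> a)"
proof -
  define K where "K = CARD('a)"
  have "K > 0" unfolding K_def by simp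
  obtain e where "e > 0" and gap: "\<And>z. z ^ K = 1 \<Longrightarrow> z \<noteq> 1 \<Longrightarrow> cmod (1 + z) \<le> 2 - e"
    using roots_of_unity_gap[OF \<open>K > 0\<close>] by blast
  define \<delta> where "\<delta> = min 1 (\<kappa> * e / K)"
  have "0 < \<delta>" "\<delta> \<le> 1" unfolding \<delta>_def using assms \<open>e > 0\<close> \<open>K > 0\<close> by auto
  moreover have "cmod (\<Sum>a\<in>UNIV. of_real (\<beta> a) * \<phi> a) \<le> (1 - \<delta>) * (\<Sum>a\<in>UNIV. \<beta> a)"
    if \<phi>: "character \<phi>" "\<phi> \<noteq> (\<lambda>_. 1)" and \<beta>: "\<And>a. \<kappa> \<le> \<beta> a \<and> \<beta> a \<le> 1"
    for \<phi> :: "'a \<Rightarrow> complex" and \<beta>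
  proof -
    obtain b where "\<phi> b \<noteq> 1" using \<phi>(2) by auto
    moreover have "\<phi> 0 = 1" by (rule character_zero[OF \<phi>(1)])
    ultimately have "b \<noteq> 0" by auto
    have "cmod (\<Sum>a\<in>UNIV. of_real (\<beta> a) * \<phi> a) \<le> (\<Sum>a\<in>UNIV. \<beta> a) - \<kappa> * (2 - cmod (\<phi> 0 + \<phi> b))"
      using \<phi>(1) \<beta> assms \<open>b \<noteq> 0\<close>
      by (intro norm_weighted_sum_unimodular_le) (auto simp: character_def)
    also have "\<dots> \<le> (\<Sum>a\<in>UNIV. \<beta> a) - \<delta> * K"
    proof -
      have "cmod (\<phi> 0 + \<phi> b) \<le> 2 - e"
        using gap[of "\<phi> b"] character_pow_card[OF \<phi>(1)] \<open>\<phi> 0 = 1\<close> \<open>\<phi> b \<noteq> 1\<close> unfolding K_def by simp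
      moreover have "\<delta> * K \<le> \<kappa> * e" unfolding \<delta>_def using \<open>K > 0\<close> by (simp add: min_mult_distrib_right)
      ultimately show ?thesis using assms by (smt (verit) mult_left_mono)
    qed
    also have "\<dots> \<le> (1 - \<delta>) * (\<Sum>a\<in>UNIV. \<beta> a)"
    proof -
      have "(\<Sum>a\<in>UNIV. \<beta> a) \<le> K" unfolding K_def using \<beta> sum_mono[of UNIV \<beta> "\<lambda>_. 1"] by simp
      then show ?thesis using \<open>0 < \<delta>\<close> by (simp add: algebra_simps)
    qed
    finally show ?thesis .
  qed
  ultimately show ?thesis by (rule that)
qed

section \<open>Summing out one coordinate of a finite product\<close>

lemma sum_PiE_fun_upd:
  assumes "t \<in> W"
  shows "(\<Sum>w\<in>PiE W A. H w) = (\<Sum>u\<in>PiE (W - {t}) A. \<Sum>a\<in>A t. H (u(t := a)))"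
proof -
  have "PiE W A = (\<lambda>(a, u). u(t := a)) ` (A t \<times> PiE (W - {t}) A)"
    using PiE_insert_eq[of t "W - {t}" A] assms by (simp add: insert_absorb)
  moreover have "inj_on (\<lambda>(a, u). u(t := a)) (A t \<times> PiE (W - {t}) A)"
    using inj_combinator[of t "W - {t}" A] by simp
  ultimately have "(\<Sum>w\<in>PiE W A. H w) = (\<Sum>(a, u)\<in>A t \<times> PiE (W - {t}) A. H (u(t := a)))"
    by (simp add: sum.reindex case_prod_unfold)
  also have "\<dots> = (\<Sum>u\<in>PiE (W - {t}) A. \<Sum>a\<in>A t. H (u(t := a)))"
    by (simp add: sum.cartesian_product[symmetric] sum.swap[of _ "A t"])
  finally show ?thesis .
qed

definition cond_mean :: "(('i \<Rightarrow> 'a::finite) \<Rightarrow> real) \<Rightarrow> ('a \<Rightarrow> complex) \<Rightarrow> 'i \<Rightarrow> ('i \<Rightarrow> 'a) \<Rightarrow> complex"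
  where "cond_mean B \<phi> t w =
    (\<Sum>a\<in>UNIV. of_real (B (w(t := a))) * \<phi> a) / of_real (\<Sum>a\<in>UNIV. B (w(t := a)))"

lemma cond_mean_fun_upd_same [simp]: "cond_mean B \<phi> t (w(t := a)) = cond_mean B \<phi> t w"
  unfolding cond_mean_def by simp

lemma cond_mean_fun_upd:
  assumes "s \<noteq> t" "\<And>w. B (w(s := a)) = B w"
  shows "cond_mean B \<phi> t (w(s := a)) = cond_mean B \<phi> t w"
proof -
  have "B ((w(s := a))(t := b)) = B (w(t := b))" for b
    using assms(2)[of "w(t := b)"] by (simp only: fun_upd_twist[OF assms(1)])
  then show ?thesis unfolding cond_mean_def by simp
qed

lemma norm_cond_mean_le:
  assumes "\<And>w. B w > 0"
    and "cmod (\<Sum>a\<in>UNIV. of_real (B (w(t := a))) * \<phi> a) \<le> c * (\<Sum>a\<in>UNIV. B (w(t := a)))"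
  shows "cmod (cond_mean B \<phi> t w) \<le> c"
proof -
  have "(\<Sum>a\<in>UNIV. B (w(t := a))) > 0" using assms(1) by (intro sum_pos) auto
  then show ?thesis
    using assms(2) unfolding cond_mean_def by (simp add: norm_divide divide_le_eq del: of_real_sum)
qed

lemma sum_PiE_cond_mean:
  fixes p A B :: "('i \<Rightarrow> 'a::finite) \<Rightarrow> real" and G :: "('i \<Rightarrow> 'a) \<Rightarrow> complex"
  assumes "t \<in> W"
    and p_eq: "\<And>w. p w = A w * B w" and B_pos: "\<And>w. B w > 0"
    and A_upd: "\<And>w a. A (w(t := a)) = A w" and G_upd: "\<And>w a. G (w(t := a)) = G w"
  shows "(\<Sum>w\<in>PiE W (\<lambda>_. UNIV). of_real (p w) * \<phi> (w t) * G w) =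
    (\<Sum>w\<in>PiE W (\<lambda>_. UNIV). of_real (p w) * cond_mean B \<phi> t w * G w)"
proof -
  let ?E = "cond_mean B \<phi> t"
  have "(\<Sum>a\<in>UNIV. of_real (p (u(t := a))) * \<phi> a * G (u(t := a))) =
      (\<Sum>a\<in>UNIV. of_real (p (u(t := a))) * ?E (u(t := a)) * G (u(t := a)))" for u
  proof -
    have "(\<Sum>a\<in>UNIV. B (u(t := a))) > 0"
      using B_pos by (intro sum_pos) auto
    then have "(\<Sum>a\<in>UNIV. of_real (B (u(t := a))) * \<phi> a) = of_real (\<Sum>a\<in>UNIV. B (u(t := a))) * ?E u"
      unfolding cond_mean_def by (simp del: of_real_sum)
    also have "\<dots> = (\<Sum>a\<in>UNIV. of_real (B (u(t := a))) * ?E u)"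
      by (simp add: sum_distrib_right)
    finally have mean: "(\<Sum>a\<in>UNIV. of_real (B (u(t := a))) * \<phi> a) = \<dots>" .
    have "(\<Sum>a\<in>UNIV. of_real (p (u(t := a))) * \<phi> a * G (u(t := a))) =
        of_real (A u) * G u * (\<Sum>a\<in>UNIV. of_real (B (u(t := a))) * \<phi> a)"
      by (simp add: p_eq A_upd G_upd sum_distrib_left algebra_simps)
    also have "\<dots> = (\<Sum>a\<in>UNIV. of_real (p (u(t := a))) * ?E (u(t := a)) * G (u(t := a)))"
      unfolding mean by (simp add: p_eq A_upd G_upd sum_distrib_left algebra_simps)
    finally show ?thesis .
  qed
  then show ?thesis
    using sum_PiE_fun_upd[OF assms(1), where A="\<lambda>_. UNIV" and H="\<lambda>w. of_real (p w) * \<phi> (w t) * G w"]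
      sum_PiE_fun_upd[OF assms(1), where A="\<lambda>_. UNIV" and H="\<lambda>w. of_real (p w) * ?E w * G w"]
    by simp
qed

lemma sum_PiE_prod_insert_cond_mean:
  fixes p A B :: "('i \<Rightarrow> 'a::finite) \<Rightarrow> real" and G :: "('i \<Rightarrow> 'a) \<Rightarrow> complex"
  assumes "t \<in> W" "finite T" "t \<notin> T"
    and p_eq: "\<And>w. p w = A w * B w" and B_pos: "\<And>w. B w > 0"
    and A_upd: "\<And>w a. A (w(t := a)) = A w" and G_upd: "\<And>w a. G (w(t := a)) = G w"
  shows "(\<Sum>w\<in>PiE W (\<lambda>_. UNIV). of_real (p w) * (\<Prod>s\<in>insert t T. \<phi> s (w s)) * G w) =
    (\<Sum>w\<in>PiE W (\<lambda>_. UNIV). of_real (p w) * (\<Prod>s\<in>T. \<phi> s (w s)) * (cond_mean B (\<phi> t) t w * G w))"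
proof -
  have "(\<Sum>w\<in>PiE W (\<lambda>_. UNIV). of_real (p w) * (\<Prod>s\<in>insert t T. \<phi> s (w s)) * G w)
      = (\<Sum>w\<in>PiE W (\<lambda>_. UNIV). of_real (p w) * \<phi> t (w t) * ((\<Prod>s\<in>T. \<phi> s (w s)) * G w))"
    using assms(2,3) by (simp add: algebra_simps)
  also have "\<dots> = (\<Sum>w\<in>PiE W (\<lambda>_. UNIV). of_real (p w) * cond_mean B (\<phi> t) t w * ((\<Prod>s\<in>T. \<phi> s (w s)) * G w))"
  proof (rule sum_PiE_cond_mean[OF \<open>t \<in> W\<close> p_eq B_pos A_upd])
    fix w a
    have "(\<Prod>s\<in>T. \<phi> s ((w(t := a)) s)) = (\<Prod>s\<in>T. \<phi> s (w s))"
      using \<open>t \<notin> T\<close> by (intro prod.cong) auto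
    then show "(\<Prod>s\<in>T. \<phi> s ((w(t := a)) s)) * G (w(t := a)) = (\<Prod>s\<in>T. \<phi> s (w s)) * G w"
      by (simp only: G_upd)
  qed
  also have "\<dots> = (\<Sum>w\<in>PiE W (\<lambda>_. UNIV). of_real (p w) * (\<Prod>s\<in>T. \<phi> s (w s)) * (cond_mean B (\<phi> t) t w * G w))"
    by (simp add: algebra_simps)
  finally show ?thesis .
qed

lemma norm_sum_PiE_contracting_factors_le:
  fixes p :: "('i \<Rightarrow> 'a::finite) \<Rightarrow> real" and A B :: "'i \<Rightarrow> ('i \<Rightarrow> 'a) \<Rightarrow> real"
    and \<phi> :: "'i \<Rightarrow> 'a \<Rightarrow> complex" and F :: "('i \<Rightarrow> 'a) \<Rightarrow> complex"
  assumes "finite T" "T \<subseteq> W"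
    and p_nonneg: "\<And>w. p w \<ge> 0" and p_sum: "(\<Sum>w\<in>PiE W (\<lambda>_. UNIV). p w) = 1"
    and p_eq: "\<And>t w. t \<in> T \<Longrightarrow> p w = A t w * B t w"
    and B_pos: "\<And>t w. t \<in> T \<Longrightarrow> B t w > 0"
    and A_upd: "\<And>t w a. t \<in> T \<Longrightarrow> A t (w(t := a)) = A t w"
    and B_upd: "\<And>t s w a. t \<in> T \<Longrightarrow> s \<in> T \<Longrightarrow> s \<noteq> t \<Longrightarrow> B t (w(s := a)) = B t w"
    and contraction: "\<And>t w. t \<in> T \<Longrightarrow>
      cmod (\<Sum>a\<in>UNIV. of_real (B t (w(t := a))) * \<phi> t a) \<le> (1 - \<delta>) * (\<Sum>a\<in>UNIV. B t (w(t := a)))"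
    and F_upd: "\<And>s w a. s \<in> T \<Longrightarrow> F (w(s := a)) = F w"
    and F_bound: "\<And>w. cmod (F w) \<le> C"
  shows "cmod (\<Sum>w\<in>PiE W (\<lambda>_. UNIV). of_real (p w) * (\<Prod>s\<in>T. \<phi> s (w s)) * F w) \<le> (1 - \<delta>) ^ card T * C"
proof -
  have "cmod (\<Sum>w\<in>PiE W (\<lambda>_. UNIV). of_real (p w) * (\<Prod>s\<in>T'. \<phi> s (w s)) * G w) \<le> (1 - \<delta>) ^ card T' * C'"
    if "T' \<subseteq> T" "\<And>s w a. s \<in> T' \<Longrightarrow> G (w(s := a)) = G w" "\<And>w. cmod (G w) \<le> C'" for T' G C'
    using finite_subset[OF that(1) \<open>finite T\<close>] that
  proof (induction T' arbitrary: G C' rule: finite_induct)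
    case empty
    have "cmod (\<Sum>w\<in>PiE W (\<lambda>_. UNIV). of_real (p w) * G w) \<le> (\<Sum>w\<in>PiE W (\<lambda>_. UNIV). p w * C')"
      using norm_sum[of "\<lambda>w. of_real (p w) * G w"] empty.prems(3) p_nonneg
      by (smt (verit) mult_left_mono norm_mult norm_of_real sum_mono)
    then show ?case using p_sum by (simp add: sum_distrib_right[symmetric])
  next
    case (insert t T')
    \<comment> \<open>The conditional mean E is small and, like G, does not read T', so the induction
      hypothesis applies to \<open>E * G\<close>.\<close>
    have "t \<in> T" "t \<in> W" using insert.prems(1) \<open>T \<subseteq> W\<close> by auto
    define E where "E = cond_mean (B t) (\<phi> t) t"
    have peel: "(\<Sum>w\<in>PiE W (\<lambda>_. UNIV). of_real (p w) * (\<Prod>s\<in>insert t T'. \<phi> s (w s)) * G w) =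
        (\<Sum>w\<in>PiE W (\<lambda>_. UNIV). of_real (p w) * (\<Prod>s\<in>T'. \<phi> s (w s)) * (E w * G w))"
      unfolding E_def using \<open>t \<in> W\<close> insert.hyps p_eq[OF \<open>t \<in> T\<close>] B_pos[OF \<open>t \<in> T\<close>]
        A_upd[OF \<open>t \<in> T\<close>] insert.prems(2)[OF insertI1]
      by (rule sum_PiE_prod_insert_cond_mean)
    have E_upd: "E (w(s := a)) = E w" if "s \<in> T'" for s w a
      unfolding E_def using that insert.prems(1) insert.hyps(2)
      by (intro cond_mean_fun_upd B_upd[OF \<open>t \<in> T\<close>]) auto
    have E_bound: "cmod (E w) \<le> 1 - \<delta>" for w
      unfolding E_def using B_pos[OF \<open>t \<in> T\<close>] contraction[OF \<open>t \<in> T\<close>] by (rule norm_cond_mean_le)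
    have "0 \<le> C'" using insert.prems(3) norm_ge_zero order_trans by blast
    have "cmod (\<Sum>w\<in>PiE W (\<lambda>_. UNIV). of_real (p w) * (\<Prod>s\<in>T'. \<phi> s (w s)) * (E w * G w))
        \<le> (1 - \<delta>) ^ card T' * ((1 - \<delta>) * C')"
    proof (rule insert.IH)
      show "T' \<subseteq> T" using insert.prems(1) by simp
      show "E (w(s := a)) * G (w(s := a)) = E w * G w" if "s \<in> T'" for s w a
        using E_upd[OF that, of w a] insert.prems(2)[of s w a] that by (simp add: fun_upd_def)
      show "cmod (E w * G w) \<le> (1 - \<delta>) * C'" for w
        unfolding norm_mult using E_bound[of w] insert.prems(3)[of w] \<open>0 \<le> C'\<close> order_trans[OF norm_ge_zero E_bound]
        by (intro mult_mono) auto
    qed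
    then show ?case
      using insert.hyps unfolding peel by (simp add: algebra_simps)
  qed
  from this[OF subset_refl F_upd F_bound] show ?thesis .
qed

section \<open>Separated sets and harmonic mixing\<close>

definition separated :: "nat \<Rightarrow> int set \<Rightarrow> bool" where
  "separated d T \<longleftrightarrow> (\<forall>s\<in>T. \<forall>t\<in>T. s \<noteq> t \<longrightarrow> int d < \<bar>s - t\<bar>)"

lemma exists_separated_subset:
  fixes S :: "int set"
  assumes "finite S"
  obtains T where "T \<subseteq> S" "separated d T" "card S \<le> (d + 1) * card T"
proof -
  \<comment> \<open>Take the largest residue class modulo d + 1.\<close>
  define m where "m = int d + 1"
  define C where "C r = {s \<in> S. s mod m = r}" for r
  define R where "R = {0..<m}"
  have "finite R" "R \<noteq> {}" "card R = d + 1" unfolding R_def m_def by auto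
  then have "Max ((\<lambda>r. card (C r)) ` R) \<in> (\<lambda>r. card (C r)) ` R" by (intro Max_in) auto
  then obtain r where "r \<in> R" and r_max: "card (C r) = Max ((\<lambda>r. card (C r)) ` R)" by force
  have "s mod m \<in> R" for s unfolding R_def m_def using pos_mod_bound[of "int d + 1" s] by simp
  then have "S = (\<Union>r\<in>R. C r)" unfolding C_def by auto
  then have "card S \<le> (\<Sum>r\<in>R. card (C r))"
    using card_UN_le[OF \<open>finite R\<close>] by simp
  also have "\<dots> \<le> card R * card (C r)"
    using sum_bounded_above[of R "\<lambda>r. card (C r)"] \<open>finite R\<close> unfolding r_max by simp
  finally have "card S \<le> (d + 1) * card (C r)" using \<open>card R = d + 1\<close> by simp
  moreover have "separated d (C r)"
    unfolding separated_def
  proof (intro ballI impI)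
    fix s t assume "s \<in> C r" "t \<in> C r" "s \<noteq> t"
    then have "m dvd s - t" unfolding C_def using mod_eq_dvd_iff[of s m t] by simp
    then have "\<bar>m\<bar> \<le> \<bar>s - t\<bar>" using \<open>s \<noteq> t\<close> by (intro dvd_imp_le_int) auto
    then show "int d < \<bar>s - t\<bar>" unfolding m_def by simp
  qed
  moreover have "C r \<subseteq> S" unfolding C_def by auto
  ultimately show ?thesis using that by blast
qed

lemma harmonically_mixingI:
  assumes "0 < \<delta>" "\<delta> \<le> 1"
    and decay: "\<And>ch. shift_character ch \<Longrightarrow>
      \<exists>k. char_rank ch \<le> m * k \<and> norm (integral\<^sup>L \<mu> (char_eval ch)) \<le> (1 - \<delta>) ^ k"
  shows "harmonically_mixing \<mu>"
  unfolding harmonically_mixing_def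
proof (intro allI impI)
  fix \<epsilon> :: real assume "\<epsilon> > 0"
  have "(\<lambda>k. (1 - \<delta>) ^ k) \<longlonglongrightarrow> 0" using assms(1,2) by (intro LIMSEQ_power_zero) simp
  then have "eventually (\<lambda>k. (1 - \<delta>) ^ k < \<epsilon>) sequentially"
    using \<open>\<epsilon> > 0\<close> by (rule order_tendstoD)
  then obtain k\<^sub>0 where k\<^sub>0: "(1 - \<delta>) ^ k\<^sub>0 < \<epsilon>"
    by (auto simp: eventually_sequentially)
  show "\<exists>R. \<forall>ch. shift_character ch \<and> R < char_rank ch \<longrightarrow> norm (integral\<^sup>L \<mu> (char_eval ch)) < \<epsilon>"
  proof (intro exI allI impI)
    fix ch :: "int \<Rightarrow> 'a \<Rightarrow> complex"
    assume ch: "shift_character ch \<and> m * k\<^sub>0 < char_rank ch"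
    then obtain k where k: "char_rank ch \<le> m * k" "norm (integral\<^sup>L \<mu> (char_eval ch)) \<le> (1 - \<delta>) ^ k"
      using decay by blast
    then have "m * k\<^sub>0 < m * k" using ch by linarith
    then have "k\<^sub>0 \<le> k" by simp
    then have "(1 - \<delta>) ^ k \<le> (1 - \<delta>) ^ k\<^sub>0" using assms(1,2) by (intro power_decreasing) auto
    then show "norm (integral\<^sup>L \<mu> (char_eval ch)) < \<epsilon>" using k(2) k\<^sub>0 by linarith
  qed
qed

section \<open>Markov measures with positive transition probabilities\<close>

locale positive_markov_measure = prob_space \<mu>
  for \<mu> :: "(int \<Rightarrow> 'a::finite) measure" +
  fixes N :: nat and q :: "'a list \<Rightarrow> 'a \<Rightarrow> real"
  assumes sets_eq: "sets \<mu> = sets shift_space"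
    and q_sum: "\<And>a. length a = N \<Longrightarrow> (\<Sum>b\<in>UNIV. q a b) = 1"
    and markov: "markov_measure N q \<mu>"
    and q_nonzero: "\<And>a b. length a = N \<Longrightarrow> q a b \<noteq> 0"
begin

lemma space_eq: "space \<mu> = UNIV"
  using sets_eq_imp_space_eq[OF sets_eq] by (simp add: shift_space_def space_PiM)

definition cylinder :: "int set \<Rightarrow> (int \<Rightarrow> 'a) \<Rightarrow> (int \<Rightarrow> 'a) set" where
  "cylinder W w = {x \<in> space \<mu>. \<forall>i\<in>W. x i = w i}"

lemma cylinder_in_sets:
  assumes "finite W"
  shows "cylinder W w \<in> sets \<mu>"
proof -
  have "(\<lambda>x. x i) \<in> measurable \<mu> (count_space UNIV)" for i
    using measurable_component_singleton[of i UNIV "\<lambda>_. count_space UNIV"]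
    unfolding measurable_cong_sets[OF sets_eq refl] shift_space_def by simp
  then have "{x \<in> space \<mu>. x i = w i} \<in> sets \<mu>" for i
    by (rule measurable_sets_Collect) simp
  then show ?thesis unfolding cylinder_def using assms by (intro sets.sets_Collect_finite_All) auto
qed

lemma prob_cylinder_cong: "(\<And>i. i \<in> W \<Longrightarrow> w i = w' i) \<Longrightarrow> prob (cylinder W w) = prob (cylinder W w')"
  unfolding cylinder_def by (rule arg_cong[where f=prob]) auto

lemma integral_eq_sum_cylinders:
  fixes f :: "(int \<Rightarrow> 'a) \<Rightarrow> 'b::{banach, second_countable_topology}"
  assumes "finite W" and f_cong: "\<And>x y. (\<And>i. i \<in> W \<Longrightarrow> x i = y i) \<Longrightarrow> f x = f y"
  shows "integral\<^sup>L \<mu> f = (\<Sum>w\<in>PiE W (\<lambda>_. UNIV). prob (cylinder W w) *\<^sub>R f w)"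
proof -
  have expand: "f x = (\<Sum>w\<in>PiE W (\<lambda>_. UNIV). indicator (cylinder W w) x *\<^sub>R f w)" for x
  proof -
    have "x \<in> cylinder W w \<longleftrightarrow> w = restrict x W" if "w \<in> PiE W (\<lambda>_. UNIV)" for w
      using that unfolding cylinder_def space_eq by (auto simp: PiE_def extensional_def)
    then have "(\<Sum>w\<in>PiE W (\<lambda>_. UNIV). indicator (cylinder W w) x *\<^sub>R f w) =
        (\<Sum>w\<in>PiE W (\<lambda>_. UNIV). if w = restrict x W then f w else 0)"
      by (intro sum.cong) (auto simp: indicator_def)
    also have "\<dots> = f (restrict x W)"
      using \<open>finite W\<close> by (simp add: finite_PiE)
    also have "\<dots> = f x" by (rule f_cong) simp
    finally show ?thesis by (rule sym)
  qed
  have "integral\<^sup>L \<mu> f = integral\<^sup>L \<mu> (\<lambda>x. \<Sum>w\<in>PiE W (\<lambda>_. UNIV). indicator (cylinder W w) x *\<^sub>R f w)"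
    by (intro arg_cong[where f="integral\<^sup>L \<mu>"] ext expand)
  also have "\<dots> = (\<Sum>w\<in>PiE W (\<lambda>_. UNIV). integral\<^sup>L \<mu> (\<lambda>x. indicator (cylinder W w) x *\<^sub>R f w))"
    using cylinder_in_sets[OF \<open>finite W\<close>]
    by (intro Bochner_Integration.integral_sum integrable_scaleR_left integrable_real_indicator)
      (auto simp: less_top[symmetric])
  also have "\<dots> = (\<Sum>w\<in>PiE W (\<lambda>_. UNIV). prob (cylinder W w) *\<^sub>R f w)"
    using cylinder_in_sets[OF \<open>finite W\<close>]
    by (intro sum.cong refl) (auto simp: integrable_real_indicator less_top[symmetric])
  finally show ?thesis .
qed

lemma sum_prob_cylinders: "finite W \<Longrightarrow> (\<Sum>w\<in>PiE W (\<lambda>_. UNIV). prob (cylinder W w)) = 1"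
  using integral_eq_sum_cylinders[of W "\<lambda>_. 1::real"] by (simp add: prob_space)

lemma integral_prod_eq_sum_cylinders:
  fixes \<phi> :: "int \<Rightarrow> 'a \<Rightarrow> complex"
  assumes "finite W" "S \<subseteq> W" "T \<subseteq> S"
  shows "integral\<^sup>L \<mu> (\<lambda>x. \<Prod>s\<in>S. \<phi> s (x s)) = (\<Sum>w\<in>PiE W (\<lambda>_. UNIV).
    of_real (prob (cylinder W w)) * (\<Prod>s\<in>T. \<phi> s (w s)) * (\<Prod>s\<in>S - T. \<phi> s (w s)))"
proof -
  have "finite S" using assms(1,2) by (rule finite_subset[rotated])
  have "integral\<^sup>L \<mu> (\<lambda>x. \<Prod>s\<in>S. \<phi> s (x s)) =
      (\<Sum>w\<in>PiE W (\<lambda>_. UNIV). prob (cylinder W w) *\<^sub>R (\<Prod>s\<in>S. \<phi> s (w s)))"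
    using assms(1,2) by (intro integral_eq_sum_cylinders prod.cong) auto
  also have "\<dots> = (\<Sum>w\<in>PiE W (\<lambda>_. UNIV).
      of_real (prob (cylinder W w)) * (\<Prod>s\<in>T. \<phi> s (w s)) * (\<Prod>s\<in>S - T. \<phi> s (w s)))"
    by (intro sum.cong refl) (simp add: prod.subset_diff[OF \<open>T \<subseteq> S\<close> \<open>finite S\<close>] scaleR_conv_of_real mult_ac)
  finally show ?thesis .
qed

definition word_prob :: "int \<Rightarrow> 'a list \<Rightarrow> real" where
  "word_prob n v = prob {x \<in> space \<mu>. \<forall>i<length v. x (n + int i) = v ! i}"

lemma word_prob_nonneg: "word_prob n v \<ge> 0"
  unfolding word_prob_def by simp

lemma word_prob_snoc:
  assumes "N \<le> length v"
  shows "word_prob n (v @ [b]) = word_prob n v * q (drop (length v - N) v) b"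
proof -
  have "{x \<in> space \<mu>. \<forall>i<length (v @ [b]). x (n + int i) = (v @ [b]) ! i} =
     {x \<in> space \<mu>. (\<forall>i<length v. x (n + int i) = v ! i) \<and> x (n + int (length v)) = b}"
    by (auto simp: nth_append less_Suc_eq)
  then show ?thesis using markov assms unfolding markov_measure_def word_prob_def by simp
qed

lemma prob_cylinder_interval_eq_word_prob:
  "prob (cylinder {n..n + int k - 1} w) = word_prob n (map (\<lambda>i. w (n + int i)) [0..<k])"
proof -
  have "(\<forall>j\<in>{n..n + int k - 1}. x j = w j) \<longleftrightarrow> (\<forall>i<k. x (n + int i) = w (n + int i))" for x
  proof
    assume word: "\<forall>i<k. x (n + int i) = w (n + int i)"
    show "\<forall>j\<in>{n..n + int k - 1}. x j = w j"
    proof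
      fix j assume "j \<in> {n..n + int k - 1}"
      then have "nat (j - n) < k" "n + int (nat (j - n)) = j" by auto
      then show "x j = w j" using word by metis
    qed
  qed auto
  then show ?thesis unfolding cylinder_def word_prob_def by simp
qed

definition transition :: "int \<Rightarrow> (int \<Rightarrow> 'a) \<Rightarrow> real" where
  "transition j w = q (map (\<lambda>k. w (j - int N + int k)) [0..<N]) (w j)"

lemma transition_cong: "(\<And>i. j - int N \<le> i \<Longrightarrow> i \<le> j \<Longrightarrow> w i = w' i) \<Longrightarrow> transition j w = transition j w'"
  unfolding transition_def by (intro arg_cong2[where f=q] map_cong) auto

lemma prob_cylinder_interval_snoc:
  assumes "L + int N - 1 \<le> U"
  shows "prob (cylinder {L..U + 1} w) = prob (cylinder {L..U} w) * transition (U + 1) w"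
proof -
  define k where "k = nat (U - L + 1)"
  define v where "v = map (\<lambda>i. w (L + int i)) [0..<k]"
  have k: "N \<le> k" "U = L + int k - 1" unfolding k_def using assms by auto
  have "map (\<lambda>i. w (L + int i)) [0..<Suc k] = v @ [w (U + 1)]"
    unfolding v_def k(2) by simp
  moreover have "drop (length v - N) v = map (\<lambda>i. w (U + 1 - int N + int i)) [0..<N]"
    unfolding v_def using k by (intro nth_equalityI) (auto simp: algebra_simps)
  ultimately have "prob (cylinder {L..L + int (Suc k) - 1} w) = prob (cylinder {L..L + int k - 1} w) * transition (U + 1) w"
    unfolding prob_cylinder_interval_eq_word_prob transition_def
    using word_prob_snoc[of v L "w (U + 1)"] k(1) by (simp add: v_def)
  moreover have "{L..L + int (Suc k) - 1} = {L..U + 1}" "{L..L + int k - 1} = {L..U}"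
    using k(2) by auto
  ultimately show ?thesis by simp
qed

lemma prob_cylinder_interval:
  assumes "L + int N - 1 \<le> U"
  shows "prob (cylinder {L..U} w) = prob (cylinder {L..L + int N - 1} w) * (\<Prod>j\<in>{L + int N..U}. transition j w)"
  using assms
proof (induction U rule: int_ge_induct)
  case base
  then show ?case by simp
next
  case (step U)
  have "{L + int N..U + 1} = insert (U + 1) {L + int N..U}" using step.hyps by auto
  then show ?case using prob_cylinder_interval_snoc[OF step.hyps] step.IH by (simp add: algebra_simps)
qed

lemma exists_word_prob_pos:
  obtains u where "length u = N" "word_prob 0 u > 0"
proof -
  have "\<exists>w. prob (cylinder {0..int N - 1} w) > 0"
  proof (rule ccontr)
    assume "\<nexists>w. prob (cylinder {0..int N - 1} w) > 0"
    then have "(\<Sum>w\<in>PiE {0..int N - 1} (\<lambda>_. UNIV). prob (cylinder {0..int N - 1} w)) \<le> 0"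
      by (intro sum_nonpos) (simp add: not_less)
    then show False by (simp add: sum_prob_cylinders)
  qed
  then obtain w where "prob (cylinder {0..int N - 1} w) > 0" by blast
  then have "word_prob 0 (map (\<lambda>i. w (int i)) [0..<N]) > 0"
    using prob_cylinder_interval_eq_word_prob[of 0 N w] by simp
  then show ?thesis using that[of "map (\<lambda>i. w (int i)) [0..<N]"] by simp
qed

lemma q_pos_if_word_prob_pos:
  assumes "N \<le> length v" "word_prob n v > 0"
  shows "q (drop (length v - N) v) b > 0"
proof -
  have "0 \<le> word_prob n v * q (drop (length v - N) v) b"
    using word_prob_nonneg[of n "v @ [b]"] unfolding word_prob_snoc[OF assms(1)] .
  then have "q (drop (length v - N) v) b \<ge> 0" using assms(2) by (simp add: zero_le_mult_iff)
  moreover have "q (drop (length v - N) v) b \<noteq> 0" using assms(1) by (intro q_nonzero) simp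
  ultimately show ?thesis by simp
qed

lemma word_prob_append_pos:
  assumes "N \<le> length u" "word_prob n u > 0"
  shows "word_prob n (u @ v) > 0"
proof (induction v rule: rev_induct)
  case Nil
  then show ?case using assms(2) by simp
next
  case (snoc c v)
  have "N \<le> length (u @ v)" using assms(1) by simp
  then have "word_prob n ((u @ v) @ [c]) = word_prob n (u @ v) * q (drop (length (u @ v) - N) (u @ v)) c"
    by (rule word_prob_snoc)
  moreover have "q (drop (length (u @ v) - N) (u @ v)) c > 0"
    using \<open>N \<le> length (u @ v)\<close> snoc.IH by (rule q_pos_if_word_prob_pos)
  ultimately show ?case using snoc.IH by simp
qed

text \<open>Only \<open>q a b \<noteq> 0\<close> is assumed; positivity comes from the nonnegativity of cylinder
  probabilities along an extension of a word of positive probability.\<close>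

lemma q_pos:
  assumes "length a = N"
  shows "q a b > 0"
proof -
  obtain u where u: "length u = N" "word_prob 0 u > 0" by (rule exists_word_prob_pos)
  then have "word_prob 0 (u @ a) > 0" by (intro word_prob_append_pos) auto
  then have "q (drop (length (u @ a) - N) (u @ a)) b > 0"
    by (intro q_pos_if_word_prob_pos) (simp add: u)
  then show ?thesis using assms u by simp
qed

lemma q_le_one:
  assumes "length a = N"
  shows "q a b \<le> 1"
proof -
  have "q a b \<le> (\<Sum>b\<in>UNIV. q a b)"
    by (rule member_le_sum) (auto intro: less_imp_le q_pos[OF assms])
  then show ?thesis using q_sum[OF assms] by simp
qed

definition q_min :: real where
  "q_min = Min {q a b | a b. length a = N}"

lemma q_min: "q_min > 0" "length a = N \<Longrightarrow> q_min \<le> q a b"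
proof -
  have "{q a b | a b. length a = N} = (\<lambda>(a, b). q a b) ` ({a. length a = N} \<times> UNIV)" by auto
  moreover have "finite {a :: 'a list. length a = N}"
    using finite_lists_length_eq[of "UNIV :: 'a set" N] by simp
  ultimately have fin: "finite {q a b | a b. length a = N}" by simp
  have "q (replicate N undefined) undefined \<in> {q a b | a b. length a = N}" by auto
  then have "{q a b | a b. length a = N} \<noteq> {}" by blast
  then show "q_min > 0" unfolding q_min_def using fin by (subst Min_gr_iff) (auto intro: q_pos)
  show "length a = N \<Longrightarrow> q_min \<le> q a b" unfolding q_min_def using fin by (intro Min_le) auto
qed

lemma transition_bounds: "q_min \<le> transition j w" "transition j w \<le> 1"
  unfolding transition_def by (simp_all add: q_min q_le_one)

text \<open>The transition factors of a cylinder probability that read coordinate t.\<close>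

definition local_weight :: "int \<Rightarrow> (int \<Rightarrow> 'a) \<Rightarrow> real" where
  "local_weight t w = (\<Prod>j\<in>{t..t + int N}. transition j w)"

lemma local_weight_bounds: "q_min ^ Suc N \<le> local_weight t w" "local_weight t w \<le> 1"
proof -
  have "(\<Prod>j\<in>{t..t + int N}. q_min) \<le> local_weight t w"
    unfolding local_weight_def using q_min(1) transition_bounds by (intro prod_mono) (auto intro: less_imp_le)
  then show "q_min ^ Suc N \<le> local_weight t w" by (simp add: nat_add_distrib)
  show "local_weight t w \<le> 1"
    unfolding local_weight_def using q_min(1) transition_bounds
    by (intro prod_le_1) (auto intro: order_trans[OF less_imp_le[OF q_min(1)]])
qed

lemma local_weight_fun_upd:
  assumes "int N < \<bar>s - t\<bar>"
  shows "local_weight t (w(s := a)) = local_weight t w"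
  unfolding local_weight_def using assms by (intro prod.cong refl transition_cong) auto

lemma prob_cylinder_split_local_weight:
  assumes "L + int N \<le> t" "t + int N \<le> U"
  shows "prob (cylinder {L..U} w) =
    prob (cylinder {L..L + int N - 1} w) * (\<Prod>j\<in>{L + int N..U} - {t..t + int N}. transition j w) *
    local_weight t w"
proof -
  have "{t..t + int N} \<subseteq> {L + int N..U}" using assms by auto
  then show ?thesis
    using prob_cylinder_interval[of L U w] assms
    by (simp add: local_weight_def prod.subset_diff[of "{t..t + int N}" "{L + int N..U}"] mult.assoc)
qed

lemma norm_integral_prod_le:
  fixes \<phi> :: "int \<Rightarrow> 'a \<Rightarrow> complex"
  assumes "finite S" "T \<subseteq> S" "separated N T"
    and unimodular: "\<And>s a. s \<in> S \<Longrightarrow> cmod (\<phi> s a) = 1"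
    and contraction: "\<And>t \<beta>. t \<in> T \<Longrightarrow> (\<And>a. q_min ^ Suc N \<le> \<beta> a \<and> \<beta> a \<le> 1) \<Longrightarrow>
      cmod (\<Sum>a\<in>UNIV. of_real (\<beta> a) * \<phi> t a) \<le> (1 - \<delta>) * (\<Sum>a\<in>UNIV. \<beta> a)"
  shows "norm (integral\<^sup>L \<mu> (\<lambda>x. \<Prod>s\<in>S. \<phi> s (x s))) \<le> (1 - \<delta>) ^ card T"
proof -
  obtain M where M: "\<And>s. s \<in> S \<Longrightarrow> \<bar>s\<bar> \<le> M"
    using \<open>finite S\<close> finite_int_iff_bounded_le by blast
  define L where "L = - M - int N"
  define U where "U = M + int N"
  have T_range: "L + int N \<le> t" "t + int N \<le> U" if "t \<in> T" for t
    using M[of t] that \<open>T \<subseteq> S\<close> unfolding L_def U_def by auto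
  define F where "F w = (\<Prod>s\<in>S - T. \<phi> s (w s))" for w
  define A where "A t w = prob (cylinder {L..L + int N - 1} w) *
    (\<Prod>j\<in>{L + int N..U} - {t..t + int N}. transition j w)" for t w
  have "S \<subseteq> {L..U}" using M unfolding L_def U_def by (force simp: abs_le_iff)
  then have "norm (integral\<^sup>L \<mu> (\<lambda>x. \<Prod>s\<in>S. \<phi> s (x s))) = cmod (\<Sum>w\<in>PiE {L..U} (\<lambda>_. UNIV).
      of_real (prob (cylinder {L..U} w)) * (\<Prod>s\<in>T. \<phi> s (w s)) * F w)"
    unfolding F_def by (subst integral_prod_eq_sum_cylinders) (use \<open>T \<subseteq> S\<close> in auto)
  also have "\<dots> \<le> (1 - \<delta>) ^ card T * 1"
  proof (rule norm_sum_PiE_contracting_factors_le[where A=A and B=local_weight])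
    show "finite T" using \<open>finite S\<close> \<open>T \<subseteq> S\<close> by (rule finite_subset[rotated])
    show "T \<subseteq> {L..U}" using T_range by force
    show "prob (cylinder {L..U} w) = A t w * local_weight t w" if "t \<in> T" for t w
      unfolding A_def using T_range[OF that] by (rule prob_cylinder_split_local_weight)
    show "A t (w(t := a)) = A t w" if "t \<in> T" for t w a
      unfolding A_def using T_range[OF that]
      by (intro arg_cong2[where f="(*)"] prob_cylinder_cong prod.cong refl transition_cong) auto
    show "local_weight t (w(s := a)) = local_weight t w" if "t \<in> T" "s \<in> T" "s \<noteq> t" for t s w a
      using \<open>separated N T\<close> that unfolding separated_def by (intro local_weight_fun_upd) auto
    show "local_weight t w > 0" for t w
      using local_weight_bounds(1)[of t w] q_min(1) by (meson less_le_trans zero_less_power)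
    show "cmod (\<Sum>a\<in>UNIV. of_real (local_weight t (w(t := a))) * \<phi> t a)
        \<le> (1 - \<delta>) * (\<Sum>a\<in>UNIV. local_weight t (w(t := a)))" if "t \<in> T" for t w
      using that local_weight_bounds by (intro contraction) auto
    show "F (w(s := a)) = F w" if "s \<in> T" for s w a
      unfolding F_def using that by (intro prod.cong) auto
    show "cmod (F w) \<le> 1" for w
      unfolding F_def using unimodular by (simp add: prod_norm[symmetric])
  qed (simp_all add: sum_prob_cylinders)
  finally show ?thesis by simp
qed

end

theorem mainTheorem8:
  fixes \<mu> :: "(int \<Rightarrow> 'a::{ab_group_add, finite}) measure"
    and N :: nat
    and q :: "'a list \<Rightarrow> 'a \<Rightarrow> real"
  assumes "prob_space \<mu>"
    and "sets \<mu> = sets shift_space"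
    and "N \<ge> 1"
    and "\<And>a. length a = N \<Longrightarrow> (\<Sum>b\<in>UNIV. q a b) = 1"
    and "shift_invariant \<mu>"
    and "markov_measure N q \<mu>"
    and "\<And>a b. length a = N \<Longrightarrow> q a b \<noteq> 0"
  shows "harmonically_mixing \<mu>"
proof -
  interpret positive_markov_measure \<mu> N q
    by (intro positive_markov_measure.intro positive_markov_measure_axioms.intro) (fact assms)+
  have "0 < q_min ^ Suc N" using q_min(1) by simp
  obtain \<delta> where \<delta>: "0 < \<delta>" "\<delta> \<le> 1" and contraction:
    "\<And>(\<phi> :: 'a \<Rightarrow> complex) \<beta>. character \<phi> \<Longrightarrow> \<phi> \<noteq> (\<lambda>_. 1) \<Longrightarrow>
       (\<And>a. q_min ^ Suc N \<le> \<beta> a \<and> \<beta> a \<le> 1) \<Longrightarrow>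
       cmod (\<Sum>a\<in>UNIV. of_real (\<beta> a) * \<phi> a) \<le> (1 - \<delta>) * (\<Sum>a\<in>UNIV. \<beta> a)"
    using nontrivial_character_contraction[OF \<open>0 < q_min ^ Suc N\<close>, where 'a='a] by blast
  show ?thesis
  proof (rule harmonically_mixingI[OF \<delta>])
    fix ch :: "int \<Rightarrow> 'a \<Rightarrow> complex"
    assume "shift_character ch"
    then have "finite (char_support ch)" and chars: "\<And>n. character (ch n)"
      by (simp_all add: shift_character_def)
    obtain T where T: "T \<subseteq> char_support ch" "separated N T" "card (char_support ch) \<le> (N + 1) * card T"
      by (rule exists_separated_subset[OF \<open>finite (char_support ch)\<close>])
    have "norm (integral\<^sup>L \<mu> (char_eval ch)) \<le> (1 - \<delta>) ^ card T"
      unfolding char_eval_def using \<open>finite (char_support ch)\<close> T(1,2)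
    proof (rule norm_integral_prod_le)
      show "cmod (ch s a) = 1" for s a using chars by (simp add: character_def)
      show "cmod (\<Sum>a\<in>UNIV. of_real (\<beta> a) * ch t a) \<le> (1 - \<delta>) * (\<Sum>a\<in>UNIV. \<beta> a)"
        if "t \<in> T" "\<And>a. q_min ^ Suc N \<le> \<beta> a \<and> \<beta> a \<le> 1" for t \<beta>
        using that T(1) chars by (intro contraction) (auto simp: char_support_def)
    qed
    then show "\<exists>k. char_rank ch \<le> (N + 1) * k \<and> norm (integral\<^sup>L \<mu> (char_eval ch)) \<le> (1 - \<delta>) ^ k"
      using T(3) unfolding char_rank_def by blast
  qed
qed

end
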